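(* Let $d\ge2$, $\alpha\in(0,\infty)^d$ and $N\in\mathbb Z_+$. For all $r,s\in N\Delta_{(d-1)}$ and $0\le n\le N$, $$H^{\alpha}_n(r,s)=\frac{N_{[n]}}{(|\alpha|+N)_{(n)}}\sum_{m=0}^{n}a^{|\alpha|}_{nm}\,\chi^{H,\alpha}_m(r,s),$$ where $$\chi^{H,\alpha}_m(r,s)=\sum_{l\in\mathbb Z_+^d,\,|l|=m}\frac{1}{DM_\alpha(l;m)}\left(\frac{\binom{m}{l}p_l(r)}{N_{[m]}}\right)\left(\frac{\binom{m}{l}p_l(s)}{N_{[m]}}\right),\qquad p_l(r)=\prod_{i=1}^d (r_i)_{[l_i]}.$$
   Context: $N\Delta_{(d-1)}=\{r\in\mathbb Z_+^d:|r|=N\}$, $|v|=\sum_iv_i$, $\binom{m}{l}=m!/\prod_il_i!$. $(c)_{(k)}=\Gamma(c+k)/\Gamma(c)$, $c_{[k]}=c(c-1)\cdots(c-k+1)$. $DM_\alpha(l;M)=\binom{M}{l}\prod_i(\alpha_i)_{(l_i)}/(|\alpha|)_{(M)}$. The Hahn kernel $H^\alpha_n(r,s)=\sum_kP_k(r)P_k(s)$ with $(P_k)$ an orthonormal basis in $L^2(DM_\alpha(\cdot;N))$ of the polynomials of degree $\le n$ orthogonal to all polynomials of degree $<n$. $a^{\theta}_{nm}=(\theta+2n-1)(-1)^{n-m}\frac{(\theta+m)_{(n-1)}}{m!(n-m)!}$, $0\le m\le n$ (with $a^\theta_{00}=1$). *)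

theory Defs
  imports Complex_Main
begin

text \<open>Multi-indices / points of N Delta_(d-1) are functions nat => nat supported on {..<d}.\<close>

definition simplex :: "nat \<Rightarrow> nat \<Rightarrow> (nat \<Rightarrow> nat) set" where
  "simplex d N = {r. (\<forall>i. d \<le> i \<longrightarrow> r i = 0) \<and> (\<Sum>i<d. r i) = N}"

definition midx_le :: "nat \<Rightarrow> nat \<Rightarrow> (nat \<Rightarrow> nat) set" where
  "midx_le d n = {l. (\<forall>i. d \<le> i \<longrightarrow> l i = 0) \<and> (\<Sum>i<d. l i) \<le> n}"

definition ffact :: "real \<Rightarrow> nat \<Rightarrow> real" where
  "ffact c k = (\<Prod>i<k. c - real i)"

definition multinom :: "nat \<Rightarrow> nat \<Rightarrow> (nat \<Rightarrow> nat) \<Rightarrow> real" where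
  "multinom d m l = fact m / (\<Prod>i<d. fact (l i))"

definition abs_alpha :: "nat \<Rightarrow> (nat \<Rightarrow> real) \<Rightarrow> real" where
  "abs_alpha d \<alpha> = (\<Sum>i<d. \<alpha> i)"

definition DM :: "nat \<Rightarrow> (nat \<Rightarrow> real) \<Rightarrow> (nat \<Rightarrow> nat) \<Rightarrow> nat \<Rightarrow> real" where
  "DM d \<alpha> l M = multinom d M l * (\<Prod>i<d. pochhammer (\<alpha> i) (l i))
                   / pochhammer (abs_alpha d \<alpha>) M"

definition ipDM :: "nat \<Rightarrow> (nat \<Rightarrow> real) \<Rightarrow> nat \<Rightarrow> ((nat \<Rightarrow> nat) \<Rightarrow> real)
                     \<Rightarrow> ((nat \<Rightarrow> nat) \<Rightarrow> real) \<Rightarrow> real" where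
  "ipDM d \<alpha> N f g = (\<Sum>r\<in>simplex d N. DM d \<alpha> r N * f r * g r)"

definition monom :: "nat \<Rightarrow> (nat \<Rightarrow> nat) \<Rightarrow> (nat \<Rightarrow> nat) \<Rightarrow> real" where
  "monom d l r = (\<Prod>i<d. real (r i) ^ l i)"

definition polys_le :: "nat \<Rightarrow> nat \<Rightarrow> nat \<Rightarrow> ((nat \<Rightarrow> nat) \<Rightarrow> real) set" where
  "polys_le d N n = {f. \<exists>c. \<forall>r\<in>simplex d N. f r = (\<Sum>l\<in>midx_le d n. c l * monom d l r)}"

definition orth_polys :: "nat \<Rightarrow> (nat \<Rightarrow> real) \<Rightarrow> nat \<Rightarrow> nat \<Rightarrow> ((nat \<Rightarrow> nat) \<Rightarrow> real) set" where
  "orth_polys d \<alpha> N n = {f. f \<in> polys_le d N n \<and>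
      (\<forall>g. (\<exists>k<n. g \<in> polys_le d N k) \<longrightarrow> ipDM d \<alpha> N f g = 0)}"

definition is_onb :: "nat \<Rightarrow> (nat \<Rightarrow> real) \<Rightarrow> nat \<Rightarrow> nat \<Rightarrow> ((nat \<Rightarrow> nat) \<Rightarrow> real) list \<Rightarrow> bool" where
  "is_onb d \<alpha> N n Ps \<longleftrightarrow>
     (\<forall>P\<in>set Ps. P \<in> orth_polys d \<alpha> N n) \<and>
     (\<forall>j<length Ps. \<forall>k<length Ps. ipDM d \<alpha> N (Ps!j) (Ps!k) = (if j = k then 1 else 0)) \<and>
     (\<forall>f\<in>orth_polys d \<alpha> N n. \<exists>c. \<forall>r\<in>simplex d N. f r = (\<Sum>k<length Ps. c k * (Ps!k) r))"

definition a_coef :: "real \<Rightarrow> nat \<Rightarrow> nat \<Rightarrow> real" where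
  "a_coef \<theta> n m = (if n = 0 then 1 else
     (\<theta> + 2 * real n - 1) * (-1) ^ (n - m) * pochhammer (\<theta> + real m) (n - 1)
       / (fact m * fact (n - m)))"

definition p_l :: "nat \<Rightarrow> (nat \<Rightarrow> nat) \<Rightarrow> (nat \<Rightarrow> nat) \<Rightarrow> real" where
  "p_l d l r = (\<Prod>i<d. ffact (real (r i)) (l i))"

definition chiH :: "nat \<Rightarrow> (nat \<Rightarrow> real) \<Rightarrow> nat \<Rightarrow> nat \<Rightarrow> (nat \<Rightarrow> nat) \<Rightarrow> (nat \<Rightarrow> nat) \<Rightarrow> real" where
  "chiH d \<alpha> N m r s = (\<Sum>l\<in>simplex d m.
      (1 / DM d \<alpha> l m) * (multinom d m l * p_l d l r / ffact (real N) m)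
                       * (multinom d m l * p_l d l s / ffact (real N) m))"

end

theory Submission
  imports Defs "HOL-Computational_Algebra.Polynomial"
begin

(*
  Write G(r,s) for the right-hand side of the claimed formula and B for the
  integral operator with kernel G on L^2(DM_alpha(.;N)).  Since G(.,s) is a polynomial of
  degree at most n, it suffices (uniqueness of reproducing kernels, onb_kernel_unique) to show
  that G(.,s) is orthogonal to all polynomials of degree < n and that B reproduces every
  element of the degree-n orthogonal space.

  The kernel chiH_m(r,s) factorises through the simplex of size m: the associated operator is
  A_m = D_m o U_m, where U_m averages over the Dirichlet-multinomial "posterior"
  DM_{alpha+l}(.;N-m) and D_m samples m of the N balls without replacement.  U_m is
  diagonal on the rising-factorial polynomials q_j(r) = prod_i (alpha_i+r_i)_(j_i) and
  D_m is diagonal on the falling-factorial polynomials p_j; both families have leading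
  term r^j.  Hence A_m is triangular w.r.t. degree, acting on degree k with eigenvalue
  lambda_{mk}.  The coefficients a_{nm} are exactly those for which the combined eigenvalue
  mu_k of B is the Kronecker delta delta_{kn} (a_coef_identity, a finite-difference
  identity).  With the self-adjointness of B this gives B = 0 on degree < n and B = id on
  the degree-n orthogonal space, which is the theorem.
*)

lemma finite_bounded_support:
  "finite {l::nat\<Rightarrow>nat. (\<forall>i. d \<le> i \<longrightarrow> l i = 0) \<and> (\<forall>i<d. l i \<le> K)}"
proof -
  have "{l::nat\<Rightarrow>nat. (\<forall>i. d \<le> i \<longrightarrow> l i = 0) \<and> (\<forall>i<d. l i \<le> K)}
     = {f. \<forall>x. (x \<in> {..<d} \<longrightarrow> f x \<in> {..K}) \<and> (x \<notin> {..<d} \<longrightarrow> f x = 0)}"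
    by (rule Collect_cong) (metis lessThan_iff atMost_iff not_le)
  then show ?thesis using finite_set_of_finite_funs[of "{..<d}" "{..K}" 0] by simp
qed

lemma finite_simplex: "finite (simplex d N)"
proof (rule finite_subset[OF _ finite_bounded_support[of d N]])
  show "simplex d N \<subseteq> {l. (\<forall>i. d \<le> i \<longrightarrow> l i = 0) \<and> (\<forall>i<d. l i \<le> N)}"
    unfolding simplex_def by (auto intro: member_le_sum[of _ "{..<d}", simplified])
qed

lemma sum_simplex_Suc:
  "(\<Sum>u\<in>simplex (Suc d) M. F u) = (\<Sum>t\<le>M. \<Sum>v\<in>simplex d (M-t). F (v(d:=t)))"
proof -
  have "(\<Sum>t\<le>M. \<Sum>v\<in>simplex d (M-t). F (v(d:=t)))
      = (\<Sum>p\<in>(SIGMA t:{..M}. simplex d (M-t)). F ((snd p)(d := fst p)))"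
    by (simp add: sum.Sigma split_beta finite_simplex)
  also have "\<dots> = (\<Sum>u\<in>simplex (Suc d) M. F u)"
  proof (rule sum.reindex_bij_betw)
    show "bij_betw (\<lambda>p. (snd p)(d := fst p)) (SIGMA t:{..M}. simplex d (M - t)) (simplex (Suc d) M)"
    proof (rule bij_betw_byWitness[where f'="\<lambda>u. (u d, u(d:=0))"])
      show "(\<lambda>p. (snd p)(d := fst p)) ` (SIGMA t:{..M}. simplex d (M - t)) \<subseteq> simplex (Suc d) M"
        by (auto simp: simplex_def)
      show "(\<lambda>u. (u d, u(d := 0))) ` simplex (Suc d) M \<subseteq> (SIGMA t:{..M}. simplex d (M - t))"
      proof
        fix x assume "x \<in> (\<lambda>u. (u d, u(d := 0))) ` simplex (Suc d) M"
        then obtain u where u: "u \<in> simplex (Suc d) M" and x: "x = (u d, u(d:=0))" by auto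
        then have s: "(\<Sum>i<d. u i) + u d = M" by (simp add: simplex_def)
        have e: "(\<Sum>i<d. (u(d:=0)) i) = (\<Sum>i<d. u i)" by (rule sum.cong) auto
        show "x \<in> (SIGMA t:{..M}. simplex d (M - t))"
          using u s e x by (auto simp: simplex_def)
      qed
      show "\<forall>p\<in>(SIGMA t:{..M}. simplex d (M - t)). (((snd p)(d := fst p)) d, ((snd p)(d := fst p))(d := 0)) = p"
        by (auto simp: simplex_def fun_eq_iff)
      show "\<forall>u\<in>simplex (Suc d) M. (snd (u d, u(d := 0)))(d := fst (u d, u(d := 0))) = u" by auto
    qed
  qed
  finally show ?thesis by simp
qed

lemma simplex_0: "simplex 0 M = (if M = 0 then {\<lambda>_. 0} else {})"
  by (auto simp: simplex_def)

text \<open>Multinomial theorem for rising factorials (Chu--Vandermonde in \<open>d\<close> variables);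
  it is the normalisation of the Dirichlet-multinomial distribution.\<close>

lemma multinomial_pochhammer:
  fixes \<beta> :: "nat \<Rightarrow> real"
  shows "(\<Sum>u\<in>simplex d M. multinom d M u * (\<Prod>i<d. pochhammer (\<beta> i) (u i)))
         = pochhammer (\<Sum>i<d. \<beta> i) M"
proof (induction d arbitrary: M)
  case 0
  then show ?case by (auto simp: simplex_0 multinom_def pochhammer_0_left)
next
  case (Suc d)
  have split: "multinom (Suc d) M (v(d:=t)) * (\<Prod>i<Suc d. pochhammer (\<beta> i) ((v(d:=t)) i))
      = of_nat (M choose t) * pochhammer (\<beta> d) t * (multinom d (M-t) v * (\<Prod>i<d. pochhammer (\<beta> i) (v i)))"
    if t: "t \<le> M" for t v
  proof -
    have p1: "(\<Prod>i<d. pochhammer (\<beta> i) ((v(d:=t)) i)) = (\<Prod>i<d. pochhammer (\<beta> i) (v i))"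
      by (rule prod.cong) auto
    have p2: "(\<Prod>i<d. fact ((v(d:=t)) i)::real) = (\<Prod>i<d. fact (v i))"
      by (rule prod.cong) auto
    have nz: "(\<Prod>i<d. fact (v i)::real) \<noteq> 0" by simp
    have ch: "real (M choose t) = fact M / (fact t * fact (M - t))"
      using t by (simp add: binomial_fact)
    show ?thesis unfolding multinom_def using nz by (simp add: p1 p2 ch field_simps)
  qed
  have "(\<Sum>u\<in>simplex (Suc d) M. multinom (Suc d) M u * (\<Prod>i<Suc d. pochhammer (\<beta> i) (u i)))
      = (\<Sum>t\<le>M. of_nat (M choose t) * pochhammer (\<beta> d) t *
         (\<Sum>v\<in>simplex d (M-t). multinom d (M-t) v * (\<Prod>i<d. pochhammer (\<beta> i) (v i))))"
    unfolding sum_simplex_Suc sum_distrib_left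
    by (rule sum.cong[OF refl], rule sum.cong[OF refl], rule split) simp
  also have "\<dots> = (\<Sum>t\<le>M. of_nat (M choose t) * pochhammer (\<beta> d) t * pochhammer (\<Sum>i<d. \<beta> i) (M - t))"
    by (simp add: Suc.IH)
  also have "\<dots> = pochhammer (\<beta> d + (\<Sum>i<d. \<beta> i)) M"
    by (rule pochhammer_binomial_sum[symmetric])
  finally show ?case by (simp add: add.commute)
qed

lemma ffact_of_nat: "k \<le> n \<Longrightarrow> ffact (real n) k = fact n / fact (n - k)"
proof (induction k)
  case 0 then show ?case by (simp add: ffact_def)
next
  case (Suc k)
  then have "ffact (real n) (Suc k) = fact n / fact (n - k) * (real n - real k)"
    by (simp add: ffact_def)
  also have "fact (n - k) = (fact (n - Suc k) :: real) * real (n - k)"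
  proof -
    have "n - k = Suc (n - Suc k)" using Suc.prems by simp
    then show ?thesis by (simp add: mult.commute)
  qed
  also have "real n - real k = real (n - k)" using Suc.prems by (simp add: of_nat_diff)
  finally show ?case using Suc.prems by simp
qed

lemma ffact_of_nat_eq_0: "n < k \<Longrightarrow> ffact (real n) k = 0"
  unfolding ffact_def by (rule prod_zero) (auto intro: bexI[of _ n])

lemma ffact_pochhammer: "ffact x n = (-1)^n * pochhammer (- x) n"
proof -
  have "pochhammer (- x) n = (\<Prod>i<n. (-1) * (x - real i))"
    by (simp add: pochhammer_prod atLeast0LessThan)
  also have "\<dots> = (-1)^n * ffact x n" by (simp only: prod.distrib ffact_def) simp
  finally show ?thesis by simp
qed

lemma ffact_add: "ffact x (a + b) = ffact x a * ffact (x - real a) b"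
  unfolding ffact_pochhammer pochhammer_product' by (simp add: power_add)

text \<open>The multinomial theorem for falling factorials, obtained from the rising one via
  \<open>x\<^sub>[\<^sub>k\<^sub>] = (-1)^k (-x)\<^sub>(\<^sub>k\<^sub>)\<close>.\<close>

lemma multinomial_ffact:
  fixes x :: "nat \<Rightarrow> real"
  shows "(\<Sum>v\<in>simplex d M. multinom d M v * (\<Prod>i<d. ffact (x i) (v i))) = ffact (\<Sum>i<d. x i) M"
proof -
  have sign: "multinom d M v * (\<Prod>i<d. ffact (x i) (v i))
      = (-1)^M * (multinom d M v * (\<Prod>i<d. pochhammer (- x i) (v i)))" if v: "v \<in> simplex d M" for v
  proof -
    have "(\<Prod>i<d. ffact (x i) (v i)) = (\<Prod>i<d. (-1)^(v i)) * (\<Prod>i<d. pochhammer (- x i) (v i))"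
      unfolding ffact_pochhammer prod.distrib ..
    also have "(\<Prod>i<d. (-1::real)^(v i)) = (-1)^M"
      using v by (simp add: power_sum[symmetric] simplex_def)
    finally show ?thesis by simp
  qed
  have "(\<Sum>v\<in>simplex d M. multinom d M v * (\<Prod>i<d. ffact (x i) (v i)))
      = (-1)^M * pochhammer (\<Sum>i<d. - x i) M"
    by (simp add: sign sum_distrib_left[symmetric] multinomial_pochhammer)
  also have "\<dots> = ffact (\<Sum>i<d. x i) M"
    by (simp add: ffact_pochhammer sum_negf)
  finally show ?thesis .
qed

text \<open>Since \<open>p\<^sub>b(u) = 0\<close> unless \<open>b \<le> u\<close> componentwise, a sum over the simplex weighted by
  \<open>p\<^sub>b\<close> only runs over \<open>u = b + v\<close> with \<open>v\<close> in the smaller simplex.\<close>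

lemma p_l_eq_0: "i < d \<Longrightarrow> r i < l i \<Longrightarrow> p_l d l r = 0"
  unfolding p_l_def by (rule prod_zero) (auto intro!: bexI[of _ i] ffact_of_nat_eq_0)

lemma sum_simplex_shift:
  assumes b: "\<forall>i. d \<le> i \<longrightarrow> b i = 0" and bk: "(\<Sum>i<d. b i) = k" and kM: "k \<le> M"
  shows "(\<Sum>u\<in>simplex d M. p_l d b u * G u)
       = (\<Sum>v\<in>simplex d (M-k). p_l d b (\<lambda>i. b i + v i) * G (\<lambda>i. b i + v i))"
proof -
  let ?T = "{u\<in>simplex d M. \<forall>i<d. b i \<le> u i}"
  have "(\<Sum>u\<in>simplex d M. p_l d b u * G u) = (\<Sum>u\<in>?T. p_l d b u * G u)"
    by (rule sum.mono_neutral_right) (auto simp: finite_simplex, meson not_le p_l_eq_0)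
  also have "\<dots> = (\<Sum>v\<in>simplex d (M-k). p_l d b (\<lambda>i. b i + v i) * G (\<lambda>i. b i + v i))"
  proof (rule sum.reindex_bij_betw[symmetric], rule bij_betw_byWitness[where f'="\<lambda>u i. u i - b i"])
    show "\<forall>a\<in>simplex d (M - k). (\<lambda>i. b i + a i - b i) = a" by auto
    show "\<forall>u\<in>?T. (\<lambda>i. b i + (u i - b i)) = u"
    proof
      fix u assume u: "u \<in> ?T"
      show "(\<lambda>i. b i + (u i - b i)) = u"
      proof
        fix i show "b i + (u i - b i) = u i"
          using u b by (cases "i < d") auto
      qed
    qed
    show "(\<lambda>v i. b i + v i) ` simplex d (M - k) \<subseteq> ?T"
    proof
      fix x assume "x \<in> (\<lambda>v i. b i + v i) ` simplex d (M - k)"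
      then obtain v where v: "v \<in> simplex d (M-k)" and x: "x = (\<lambda>i. b i + v i)" by auto
      have "(\<Sum>i<d. b i + v i) = M" using v bk kM by (simp add: sum.distrib simplex_def)
      then show "x \<in> ?T" using v b x by (auto simp: simplex_def)
    qed
    show "(\<lambda>u i. u i - b i) ` ?T \<subseteq> simplex d (M - k)"
    proof
      fix x assume "x \<in> (\<lambda>u i. u i - b i) ` ?T"
      then obtain u where u: "u \<in> ?T" and x: "x = (\<lambda>i. u i - b i)" by auto
      have "(\<Sum>i<d. u i - b i) = (\<Sum>i<d. u i) - (\<Sum>i<d. b i)"
        using u by (intro sum_subtractf_nat) auto
      then show "x \<in> simplex d (M - k)" using u b x bk by (auto simp: simplex_def)
    qed
  qed
  finally show ?thesis .
qed

lemma sum_simplex_shift_eq_0: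
  assumes b: "(\<Sum>i<d. b i) = k" and kM: "M < k"
  shows "(\<Sum>u\<in>simplex d M. p_l d b u * G u) = 0"
proof (rule sum.neutral, rule ballI)
  fix u assume u: "u \<in> simplex d M"
  have "\<exists>i<d. u i < b i"
  proof (rule ccontr)
    assume "\<not> ?thesis"
    then have "(\<Sum>i<d. b i) \<le> (\<Sum>i<d. u i)" by (intro sum_mono) (metis lessThan_iff not_less)
    then show False using u b kM by (simp add: simplex_def)
  qed
  then show "p_l d b u * G u = 0" using p_l_eq_0 by auto
qed

lemma abs_alpha_pos: "d \<ge> 1 \<Longrightarrow> (\<And>i. i < d \<Longrightarrow> \<alpha> i > 0) \<Longrightarrow> abs_alpha d \<alpha> > 0"
  unfolding abs_alpha_def by (intro sum_pos) (auto simp: lessThan_empty_iff)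

lemma abs_alpha_shift:
  assumes "(\<Sum>i<d. l i) = m"
  shows "abs_alpha d (\<lambda>i. \<beta> i + real (l i)) = abs_alpha d \<beta> + real m"
  using assms by (simp add: abs_alpha_def sum.distrib flip: of_nat_sum)

lemma DM_pos:
  assumes "\<And>i. i < d \<Longrightarrow> \<alpha> i > 0" and "abs_alpha d \<alpha> > 0"
  shows "DM d \<alpha> l M > 0"
  unfolding DM_def multinom_def using assms
  by (auto intro!: divide_pos_pos mult_pos_pos prod_pos pochhammer_pos)

lemma sum_DM_eq_1:
  assumes "pochhammer (abs_alpha d \<beta>) M \<noteq> 0"
  shows "(\<Sum>u\<in>simplex d M. DM d \<beta> u M) = 1"
proof -
  have "(\<Sum>u\<in>simplex d M. DM d \<beta> u M)
      = (\<Sum>u\<in>simplex d M. multinom d M u * (\<Prod>i<d. pochhammer (\<beta> i) (u i))) / pochhammer (abs_alpha d \<beta>) M"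
    unfolding DM_def by (simp add: sum_divide_distrib)
  then show ?thesis using multinomial_pochhammer[of d M \<beta>] assms by (simp add: abs_alpha_def)
qed

lemma DM_rising_shift:
  assumes pos: "abs_alpha d \<beta> > 0" and jk: "(\<Sum>i<d. j i) = k"
  shows "DM d \<beta> u M * (\<Prod>i<d. pochhammer (\<beta> i + real (u i)) (j i))
       = (\<Prod>i<d. pochhammer (\<beta> i) (j i)) * (pochhammer (abs_alpha d \<beta> + real M) k / pochhammer (abs_alpha d \<beta>) k)
         * DM d (\<lambda>i. \<beta> i + real (j i)) u M"
proof -
  let ?a = "abs_alpha d \<beta>"
  have e1: "(\<Prod>i<d. pochhammer (\<beta> i) (u i)) * (\<Prod>i<d. pochhammer (\<beta> i + real (u i)) (j i))
      = (\<Prod>i<d. pochhammer (\<beta> i) (j i)) * (\<Prod>i<d. pochhammer (\<beta> i + real (j i)) (u i))"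
    unfolding prod.distrib[symmetric]
    by (rule prod.cong[OF refl]) (metis pochhammer_product' add.commute)
  have e2: "pochhammer ?a M * pochhammer (?a + real M) k = pochhammer ?a k * pochhammer (?a + real k) M"
    by (metis pochhammer_product' add.commute)
  have p1: "pochhammer ?a M > 0" "pochhammer ?a k > 0" "pochhammer (?a + real k) M > 0"
    using pos by (auto intro!: pochhammer_pos)
  show ?thesis
    unfolding DM_def abs_alpha_shift[OF jk] using p1 e1 e2 by (simp add: field_simps)
qed

text \<open>Bayes' formula for the Dirichlet-multinomial urn: drawing \<open>m\<close> of the \<open>N\<close> balls of a
  DM-distributed configuration \<open>l+u\<close> without replacement, the observed sample \<open>l\<close> is
  \<open>DM\<^sub>\<alpha>(\<cdot>;m)\<close>-distributed and the rest \<open>u\<close> is \<open>DM\<^sub>\<alpha>\<^sub>+\<^sub>l(\<cdot>;N-m)\<close>-distributed.\<close>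

lemma DM_posterior:
  assumes apos: "abs_alpha d \<alpha> > 0"
    and l: "l \<in> simplex d m" and mN: "m \<le> N"
  shows "DM d \<alpha> (\<lambda>i. l i + u i) N * (multinom d m l * p_l d l (\<lambda>i. l i + u i) / ffact (real N) m)
       = DM d \<alpha> l m * DM d (\<lambda>i. \<alpha> i + real (l i)) u (N - m)"
proof -
  let ?a = "abs_alpha d \<alpha>"
  define FL where "FL = (\<Prod>i<d. fact (l i) :: real)"
  define FU where "FU = (\<Prod>i<d. fact (u i) :: real)"
  define FLU where "FLU = (\<Prod>i<d. fact (l i + u i) :: real)"
  define PL where "PL = (\<Prod>i<d. pochhammer (\<alpha> i) (l i))"
  define PU where "PU = (\<Prod>i<d. pochhammer (\<alpha> i + real (l i)) (u i))"
  have pl: "p_l d l (\<lambda>i. l i + u i) = FLU / FU"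
    unfolding p_l_def FLU_def FU_def prod_dividef[symmetric]
    by (rule prod.cong[OF refl]) (metis ffact_of_nat le_add1 add_diff_cancel_left')
  have plu: "(\<Prod>i<d. pochhammer (\<alpha> i) (l i + u i)) = PL * PU"
    unfolding PL_def PU_def prod.distrib[symmetric]
    by (rule prod.cong[OF refl]) (simp add: pochhammer_product')
  have pN: "pochhammer ?a N = pochhammer ?a m * pochhammer (?a + real m) (N - m)"
    using mN pochhammer_product'[of ?a m "N - m"] by simp
  have aa: "abs_alpha d (\<lambda>i. \<alpha> i + real (l i)) = ?a + real m"
    using l by (intro abs_alpha_shift) (simp add: simplex_def)
  have fN: "ffact (real N) m = fact N / fact (N - m)" using mN by (simp add: ffact_of_nat)
  have nz: "FL \<noteq> 0" "FU \<noteq> 0" "FLU \<noteq> 0" unfolding FL_def FU_def FLU_def by auto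
  have p1: "pochhammer ?a m > 0" "pochhammer (?a + real m) (N - m) > 0"
    using apos by (auto intro!: pochhammer_pos)
  show ?thesis
    unfolding DM_def multinom_def aa pl plu pN fN
    unfolding FL_def[symmetric] FU_def[symmetric] FLU_def[symmetric] PL_def[symmetric] PU_def[symmetric]
    using nz p1 by (simp add: field_simps)
qed

text \<open>Polynomial functions of degree \<open>< k\<close> on the simplex.  Working with the strict bound
  makes the degree 0 space trivial and the triangularity arguments below uniform.\<close>

definition midx_lt :: "nat \<Rightarrow> nat \<Rightarrow> (nat \<Rightarrow> nat) set" where
  "midx_lt d k = {l. (\<forall>i. d \<le> i \<longrightarrow> l i = 0) \<and> (\<Sum>i<d. l i) < k}"

definition polys_lt :: "nat \<Rightarrow> nat \<Rightarrow> nat \<Rightarrow> ((nat \<Rightarrow> nat) \<Rightarrow> real) set" where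
  "polys_lt d N k = {f. \<exists>c. \<forall>r\<in>simplex d N. f r = (\<Sum>l\<in>midx_lt d k. c l * Defs.monom d l r)}"

lemma finite_midx_lt: "finite (midx_lt d k)"
proof (rule finite_subset[OF _ finite_bounded_support[of d k]])
  show "midx_lt d k \<subseteq> {l. (\<forall>i. d \<le> i \<longrightarrow> l i = 0) \<and> (\<forall>i<d. l i \<le> k)}"
    unfolding midx_lt_def
    by (auto intro: order.trans[OF member_le_sum[of _ "{..<d}", simplified]])
qed

lemma polys_le_eq_polys_lt: "polys_le d N k = polys_lt d N (Suc k)"
proof -
  have "midx_le d k = midx_lt d (Suc k)" unfolding midx_le_def midx_lt_def by auto
  then show ?thesis unfolding polys_le_def polys_lt_def by simp
qed

lemma polys_lt_cong:
  "f \<in> polys_lt d N k \<Longrightarrow> (\<And>r. r \<in> simplex d N \<Longrightarrow> g r = f r) \<Longrightarrow> g \<in> polys_lt d N k"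
  unfolding polys_lt_def by auto

lemma polys_lt_zero: "(\<And>r. r \<in> simplex d N \<Longrightarrow> f r = 0) \<Longrightarrow> f \<in> polys_lt d N k"
  unfolding polys_lt_def by (rule CollectI, rule exI[of _ "\<lambda>_. 0"]) auto

lemma polys_lt_0_eq_0: "f \<in> polys_lt d N 0 \<Longrightarrow> r \<in> simplex d N \<Longrightarrow> f r = 0"
proof -
  have "midx_lt d 0 = {}" unfolding midx_lt_def by auto
  then show "f \<in> polys_lt d N 0 \<Longrightarrow> r \<in> simplex d N \<Longrightarrow> f r = 0" unfolding polys_lt_def by auto
qed

lemma polys_lt_add:
  assumes "f \<in> polys_lt d N k" "g \<in> polys_lt d N k" shows "(\<lambda>r. f r + g r) \<in> polys_lt d N k"
proof -
  obtain c where c: "\<forall>r\<in>simplex d N. f r = (\<Sum>l\<in>midx_lt d k. c l * Defs.monom d l r)"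
    using assms(1) unfolding polys_lt_def by auto
  obtain c' where c': "\<forall>r\<in>simplex d N. g r = (\<Sum>l\<in>midx_lt d k. c' l * Defs.monom d l r)"
    using assms(2) unfolding polys_lt_def by auto
  show ?thesis unfolding polys_lt_def
    by (rule CollectI, rule exI[of _ "\<lambda>l. c l + c' l"]) (simp add: c c' sum.distrib distrib_right)
qed

lemma polys_lt_scale:
  assumes "f \<in> polys_lt d N k" shows "(\<lambda>r. a * f r) \<in> polys_lt d N k"
proof -
  obtain c where c: "\<forall>r\<in>simplex d N. f r = (\<Sum>l\<in>midx_lt d k. c l * Defs.monom d l r)"
    using assms(1) unfolding polys_lt_def by auto
  show ?thesis unfolding polys_lt_def
    by (rule CollectI, rule exI[of _ "\<lambda>l. a * c l"]) (simp add: c sum_distrib_left mult.assoc)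
qed

lemma polys_lt_diff:
  assumes "f \<in> polys_lt d N k" "g \<in> polys_lt d N k" shows "(\<lambda>r. f r - g r) \<in> polys_lt d N k"
  using polys_lt_add[OF assms(1) polys_lt_scale[OF assms(2), of "-1"]] by simp

lemma polys_lt_sum:
  assumes "finite I" "\<And>x. x \<in> I \<Longrightarrow> f x \<in> polys_lt d N k"
  shows "(\<lambda>r. \<Sum>x\<in>I. f x r) \<in> polys_lt d N k"
  using assms
proof (induction I rule: finite_induct)
  case empty then show ?case by (simp add: polys_lt_zero)
next
  case (insert x F)
  then show ?case using polys_lt_add[of "f x" d N k "\<lambda>r. \<Sum>x\<in>F. f x r"] by simp
qed

lemma polys_lt_mono:
  assumes "f \<in> polys_lt d N k" "k \<le> k'" shows "f \<in> polys_lt d N k'"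
proof -
  obtain c where c: "\<forall>r\<in>simplex d N. f r = (\<Sum>l\<in>midx_lt d k. c l * Defs.monom d l r)"
    using assms(1) unfolding polys_lt_def by auto
  have sub: "midx_lt d k \<subseteq> midx_lt d k'" using assms(2) unfolding midx_lt_def by auto
  show ?thesis unfolding polys_lt_def
  proof (rule CollectI, rule exI[of _ "\<lambda>l. if l \<in> midx_lt d k then c l else 0"], rule ballI)
    fix r assume r: "r \<in> simplex d N"
    have "(\<Sum>l\<in>midx_lt d k'. (if l \<in> midx_lt d k then c l else 0) * Defs.monom d l r)
        = (\<Sum>l\<in>midx_lt d k. (if l \<in> midx_lt d k then c l else 0) * Defs.monom d l r)"
      by (rule sum.mono_neutral_right[OF finite_midx_lt sub]) auto
    then show "f r = (\<Sum>l\<in>midx_lt d k'. (if l \<in> midx_lt d k then c l else 0) * Defs.monom d l r)"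
      using c r by simp
  qed
qed

lemma polys_lt_monom:
  assumes "\<forall>i. d \<le> i \<longrightarrow> l i = 0" "(\<Sum>i<d. l i) < k" shows "Defs.monom d l \<in> polys_lt d N k"
  unfolding polys_lt_def
proof (rule CollectI, rule exI[of _ "\<lambda>l'. if l' = l then 1 else 0"], rule ballI)
  fix r
  have "l \<in> midx_lt d k" using assms unfolding midx_lt_def by auto
  have "(\<Sum>l'\<in>midx_lt d k. (if l' = l then 1 else 0) * Defs.monom d l' r)
      = (\<Sum>l'\<in>midx_lt d k. if l' = l then Defs.monom d l' r else 0)"
    by (rule sum.cong) auto
  also have "\<dots> = Defs.monom d l r" using \<open>l \<in> midx_lt d k\<close> by (simp add: finite_midx_lt)
  finally show "Defs.monom d l r = (\<Sum>l'\<in>midx_lt d k. (if l' = l then 1 else 0) * Defs.monom d l' r)"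
    by simp
qed

lemma monom_add: "Defs.monom d (\<lambda>i. l i + l' i) r = Defs.monom d l r * Defs.monom d l' r"
  unfolding Defs.monom_def by (simp add: power_add prod.distrib)

lemma polys_lt_mult:
  assumes "f \<in> polys_lt d N a" "g \<in> polys_lt d N (Suc b)" shows "(\<lambda>r. f r * g r) \<in> polys_lt d N (a + b)"
proof -
  obtain c where c: "\<forall>r\<in>simplex d N. f r = (\<Sum>l\<in>midx_lt d a. c l * Defs.monom d l r)"
    using assms(1) unfolding polys_lt_def by auto
  obtain c' where c': "\<forall>r\<in>simplex d N. g r = (\<Sum>l\<in>midx_lt d (Suc b). c' l * Defs.monom d l r)"
    using assms(2) unfolding polys_lt_def by auto
  let ?S = "midx_lt d a \<times> midx_lt d (Suc b)"
  let ?add = "\<lambda>p::(nat\<Rightarrow>nat)\<times>(nat\<Rightarrow>nat). (\<lambda>i. fst p i + snd p i)"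
  define C where "C u = (\<Sum>p\<in>{p\<in>?S. ?add p = u}. c (fst p) * c' (snd p))" for u
  have fin: "finite ?S" by (simp add: finite_midx_lt)
  have img: "?add ` ?S \<subseteq> midx_lt d (a + b)"
    unfolding midx_lt_def by (auto simp: sum.distrib)
  show ?thesis unfolding polys_lt_def
  proof (rule CollectI, rule exI[of _ C], rule ballI)
    fix r assume r: "r \<in> simplex d N"
    have "f r * g r = (\<Sum>p\<in>?S. c (fst p) * c' (snd p) * Defs.monom d (?add p) r)"
      unfolding c[rule_format, OF r] c'[rule_format, OF r] sum_product sum.cartesian_product
      by (rule sum.cong[OF refl]) (simp add: monom_add split_beta mult_ac)
    also have "\<dots> = (\<Sum>u\<in>midx_lt d (a + b). \<Sum>p\<in>{p\<in>?S. ?add p = u}. c (fst p) * c' (snd p) * Defs.monom d (?add p) r)"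
      by (rule sum.group[OF fin finite_midx_lt img, symmetric])
    also have "\<dots> = (\<Sum>u\<in>midx_lt d (a + b). C u * Defs.monom d u r)"
      unfolding C_def sum_distrib_right
      by (rule sum.cong[OF refl], rule sum.cong[OF refl]) auto
    finally show "f r * g r = (\<Sum>u\<in>midx_lt d (a + b). C u * Defs.monom d u r)" .
  qed
qed

lemma poly_eq_sum_below:
  fixes Q :: "real poly"
  assumes "\<forall>t\<ge>e. coeff Q t = 0"
  shows "poly Q x = (\<Sum>t<e. coeff Q t * x ^ t)"
proof (cases "Q = 0")
  case True then show ?thesis by simp
next
  case False
  then have "coeff Q (degree Q) \<noteq> 0" by simp
  then have de: "degree Q < e" using assms by (meson not_le)
  have "poly Q x = (\<Sum>t\<le>degree Q. coeff Q t * x ^ t)" by (rule poly_altdef)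
  also have "\<dots> = (\<Sum>t<e. coeff Q t * x ^ t)"
    by (rule sum.mono_neutral_left) (use de in \<open>auto simp: coeff_eq_0\<close>)
  finally show ?thesis .
qed

lemma polys_lt_coord_pow:
  assumes "i < d" "t < e" shows "(\<lambda>r. real (r i) ^ t) \<in> polys_lt d N e"
proof -
  let ?l = "\<lambda>j. if j = i then t else 0"
  have mem: "Defs.monom d ?l \<in> polys_lt d N e"
    by (rule polys_lt_monom) (use assms in \<open>auto simp: if_distrib cong: if_cong\<close>)
  have "Defs.monom d ?l r = (\<Prod>j<d. if j = i then real (r i) ^ t else 1)" for r
    unfolding Defs.monom_def by (rule prod.cong) auto
  then have "Defs.monom d ?l r = real (r i) ^ t" for r using assms by simp
  then show ?thesis by (intro polys_lt_cong[OF mem]) simp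
qed

lemma polys_lt_coord_poly:
  assumes "i < d" "\<forall>t\<ge>e. coeff Q t = 0" shows "(\<lambda>r. poly Q (real (r i))) \<in> polys_lt d N e"
proof -
  have "(\<lambda>r. \<Sum>t<e. coeff Q t * real (r i) ^ t) \<in> polys_lt d N e"
    by (rule polys_lt_sum) (auto intro!: polys_lt_scale polys_lt_coord_pow assms)
  then show ?thesis by (rule polys_lt_cong) (simp add: poly_eq_sum_below[OF assms(2)])
qed

lemma polys_lt_prod_monic:
  assumes "finite I" "I \<subseteq> {..<d}"
    and Q: "\<And>i. i \<in> I \<Longrightarrow> coeff (Q i) (e i) = 1 \<and> (\<forall>t>e i. coeff (Q i) t = 0)"
  shows "(\<lambda>r. \<Prod>i\<in>I. poly (Q i) (real (r i))) \<in> polys_lt d N (Suc (\<Sum>i\<in>I. e i)) \<and>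
         (\<lambda>r. (\<Prod>i\<in>I. poly (Q i) (real (r i))) - (\<Prod>i\<in>I. real (r i) ^ e i)) \<in> polys_lt d N (\<Sum>i\<in>I. e i)"
  using assms
proof (induction I rule: finite_induct)
  case empty
  have mem: "Defs.monom d (\<lambda>_. 0) \<in> polys_lt d N (Suc 0)" by (rule polys_lt_monom) auto
  have "(\<lambda>r. 1) \<in> polys_lt d N (Suc 0)" by (rule polys_lt_cong[OF mem]) (simp add: Defs.monom_def)
  then show ?case by (auto intro: polys_lt_zero)
next
  case (insert i I)
  let ?F = "\<lambda>r. \<Prod>i\<in>I. poly (Q i) (real (r i))"
  let ?M = "\<lambda>r. \<Prod>i\<in>I. real (r i) ^ e i"
  let ?E = "\<Sum>i\<in>I. e i"
  have IH: "?F \<in> polys_lt d N (Suc ?E)" "(\<lambda>r. ?F r - ?M r) \<in> polys_lt d N ?E"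
    using insert by auto
  have id: "i < d" using insert by auto
  have Qi: "coeff (Q i) (e i) = 1" "\<forall>t>e i. coeff (Q i) t = 0" using insert by auto
  have p1: "(\<lambda>r. poly (Q i) (real (r i))) \<in> polys_lt d N (Suc (e i))"
    by (rule polys_lt_coord_poly[OF id]) (use Qi in auto)
  have p2: "(\<lambda>r. poly (Q i - Polynomial.monom 1 (e i)) (real (r i))) \<in> polys_lt d N (e i)"
    by (rule polys_lt_coord_poly[OF id]) (use Qi in \<open>auto simp: coeff_monom\<close>)
  have p3: "(\<lambda>r. real (r i) ^ e i) \<in> polys_lt d N (Suc (e i))"
    by (rule polys_lt_coord_pow[OF id]) simp
  have s: "(\<Sum>i\<in>insert i I. e i) = e i + ?E" using insert by simp
  have A: "(\<lambda>r. poly (Q i) (real (r i)) * ?F r) \<in> polys_lt d N (Suc (e i) + ?E)"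
    by (rule polys_lt_mult[OF p1 IH(1)])
  have B1: "(\<lambda>r. poly (Q i - Polynomial.monom 1 (e i)) (real (r i)) * ?F r) \<in> polys_lt d N (e i + ?E)"
    by (rule polys_lt_mult[OF p2 IH(1)])
  have B2: "(\<lambda>r. (?F r - ?M r) * real (r i) ^ e i) \<in> polys_lt d N (e i + ?E)"
    using polys_lt_mult[OF IH(2) p3] by (simp add: add.commute)
  have B: "(\<lambda>r. poly (Q i - Polynomial.monom 1 (e i)) (real (r i)) * ?F r + (?F r - ?M r) * real (r i) ^ e i)
      \<in> polys_lt d N (e i + ?E)"
    using polys_lt_add[OF B1 B2] by simp
  show ?case
  proof
    show "(\<lambda>r. \<Prod>i\<in>insert i I. poly (Q i) (real (r i))) \<in> polys_lt d N (Suc (\<Sum>i\<in>insert i I. e i))"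
      using A insert by (simp add: s)
    show "(\<lambda>r. (\<Prod>i\<in>insert i I. poly (Q i) (real (r i))) - (\<Prod>i\<in>insert i I. real (r i) ^ e i))
        \<in> polys_lt d N (\<Sum>i\<in>insert i I. e i)"
      unfolding s by (rule polys_lt_cong[OF B]) (simp add: insert poly_monom algebra_simps)
  qed
qed

lemma monic_linear_prod:
  fixes c :: "nat \<Rightarrow> real"
  shows "coeff (\<Prod>t<n. [:c t, 1:]) n = 1 \<and> (\<forall>t'>n. coeff (\<Prod>t<n. [:c t, 1:]) t' = 0)"
proof -
  have nz: "\<forall>t\<in>{..<n}. [:c t, 1:] \<noteq> 0" by simp
  have deg: "degree (\<Prod>t<n. [:c t, 1:]) = n"
    using degree_prod_eq_sum_degree[OF nz] by simp
  have lc: "lead_coeff (\<Prod>t<n. [:c t, 1:]) = 1" by (simp add: lead_coeff_prod)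
  show ?thesis using deg lc by (auto intro: coeff_eq_0)
qed

definition rising_l :: "nat \<Rightarrow> (nat \<Rightarrow> real) \<Rightarrow> (nat \<Rightarrow> nat) \<Rightarrow> (nat \<Rightarrow> nat) \<Rightarrow> real" where
  "rising_l d \<alpha> j r = (\<Prod>i<d. pochhammer (\<alpha> i + real (r i)) (j i))"

lemma p_l_leading:
  shows "p_l d b \<in> polys_lt d N (Suc (\<Sum>i<d. b i))"
    and "(\<lambda>r. p_l d b r - Defs.monom d b r) \<in> polys_lt d N (\<Sum>i<d. b i)"
proof -
  have poly_ffact: "poly (\<Prod>t<n. [:- real t, 1:]) x = ffact x n" for n x
    unfolding ffact_def poly_prod by simp
  have "(\<lambda>r. \<Prod>i<d. poly (\<Prod>t<b i. [:- real t, 1:]) (real (r i))) \<in> polys_lt d N (Suc (\<Sum>i<d. b i)) \<and>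
     (\<lambda>r. (\<Prod>i<d. poly (\<Prod>t<b i. [:- real t, 1:]) (real (r i))) - (\<Prod>i<d. real (r i) ^ b i))
       \<in> polys_lt d N (\<Sum>i<d. b i)"
    by (rule polys_lt_prod_monic) (auto simp: monic_linear_prod)
  then show "p_l d b \<in> polys_lt d N (Suc (\<Sum>i<d. b i))"
    and "(\<lambda>r. p_l d b r - Defs.monom d b r) \<in> polys_lt d N (\<Sum>i<d. b i)"
    unfolding p_l_def Defs.monom_def poly_ffact by auto
qed

lemma rising_l_leading:
  shows "rising_l d \<alpha> b \<in> polys_lt d N (Suc (\<Sum>i<d. b i))"
    and "(\<lambda>r. rising_l d \<alpha> b r - Defs.monom d b r) \<in> polys_lt d N (\<Sum>i<d. b i)"
proof -
  have poly_rising: "poly (\<Prod>t<n. [:a + real t, 1:]) x = pochhammer (a + x) n" for a n x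
    unfolding pochhammer_prod poly_prod atLeast0LessThan by (simp add: algebra_simps)
  have "(\<lambda>r. \<Prod>i<d. poly (\<Prod>t<b i. [:\<alpha> i + real t, 1:]) (real (r i))) \<in> polys_lt d N (Suc (\<Sum>i<d. b i)) \<and>
     (\<lambda>r. (\<Prod>i<d. poly (\<Prod>t<b i. [:\<alpha> i + real t, 1:]) (real (r i))) - (\<Prod>i<d. real (r i) ^ b i))
       \<in> polys_lt d N (\<Sum>i<d. b i)"
    by (rule polys_lt_prod_monic) (auto simp: monic_linear_prod)
  then show "rising_l d \<alpha> b \<in> polys_lt d N (Suc (\<Sum>i<d. b i))"
    and "(\<lambda>r. rising_l d \<alpha> b r - Defs.monom d b r) \<in> polys_lt d N (\<Sum>i<d. b i)"
    unfolding rising_l_def Defs.monom_def poly_rising by auto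
qed

text \<open>The three operators behind \<open>\<chi>\<^sub>m\<close>: the integral operator \<open>A\<^sub>m\<close> with kernel \<open>\<chi>\<^sub>m\<close> w.r.t.
  \<open>DM\<^sub>\<alpha>(\<cdot>;N)\<close>, the "up" operator \<open>U\<^sub>m\<close> from functions on \<open>N\<Delta>\<close> to functions on \<open>m\<Delta>\<close>
  (posterior expectation given a sample \<open>l\<close>), and the "down" operator \<open>D\<^sub>m\<close> from
  functions on \<open>m\<Delta>\<close> to functions on \<open>N\<Delta>\<close> (expectation over a hypergeometric sample).\<close>

definition chi_op :: "nat \<Rightarrow> (nat \<Rightarrow> real) \<Rightarrow> nat \<Rightarrow> nat \<Rightarrow> ((nat \<Rightarrow> nat) \<Rightarrow> real) \<Rightarrow> (nat \<Rightarrow> nat) \<Rightarrow> real" where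
  "chi_op d \<alpha> N m f s = (\<Sum>r\<in>simplex d N. DM d \<alpha> r N * chiH d \<alpha> N m r s * f r)"

definition up_op :: "nat \<Rightarrow> (nat \<Rightarrow> real) \<Rightarrow> nat \<Rightarrow> nat \<Rightarrow> ((nat \<Rightarrow> nat) \<Rightarrow> real) \<Rightarrow> (nat \<Rightarrow> nat) \<Rightarrow> real" where
  "up_op d \<alpha> N m f l = (\<Sum>u\<in>simplex d (N-m). DM d (\<lambda>i. \<alpha> i + real (l i)) u (N-m) * f (\<lambda>i. l i + u i))"

definition down_op :: "nat \<Rightarrow> nat \<Rightarrow> nat \<Rightarrow> ((nat \<Rightarrow> nat) \<Rightarrow> real) \<Rightarrow> (nat \<Rightarrow> nat) \<Rightarrow> real" where
  "down_op d N m g s = (\<Sum>l\<in>simplex d m. multinom d m l * p_l d l s / ffact (real N) m * g l)"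

text \<open>Integrating against \<open>p\<^sub>l\<close> (the likelihood of the sample \<open>l\<close>) turns \<open>DM\<^sub>\<alpha>(\<cdot>;N)\<close> into
  \<open>DM\<^sub>\<alpha>(l;m)\<close> times the posterior expectation \<open>U\<^sub>m\<close>; this is the inner sum of \<open>A\<^sub>m\<close>.\<close>

lemma weighted_p_l_sum:
  assumes apos: "abs_alpha d \<alpha> > 0" and l: "l \<in> simplex d m" and mN: "m \<le> N"
  shows "(\<Sum>r\<in>simplex d N. DM d \<alpha> r N * (multinom d m l * p_l d l r / ffact (real N) m) * f r)
       = DM d \<alpha> l m * up_op d \<alpha> N m f l"
proof -
  have lb: "\<forall>i. d \<le> i \<longrightarrow> l i = 0" "(\<Sum>i<d. l i) = m" using l by (auto simp: simplex_def)
  have "(\<Sum>r\<in>simplex d N. DM d \<alpha> r N * (multinom d m l * p_l d l r / ffact (real N) m) * f r)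
      = (\<Sum>r\<in>simplex d N. p_l d l r * (DM d \<alpha> r N * multinom d m l / ffact (real N) m * f r))"
    by (rule sum.cong[OF refl]) (simp add: field_simps)
  also have "\<dots> = (\<Sum>u\<in>simplex d (N-m). p_l d l (\<lambda>i. l i + u i) *
        (DM d \<alpha> (\<lambda>i. l i + u i) N * multinom d m l / ffact (real N) m * f (\<lambda>i. l i + u i)))"
    by (rule sum_simplex_shift[OF lb mN])
  also have "\<dots> = (\<Sum>u\<in>simplex d (N-m). DM d \<alpha> l m * (DM d (\<lambda>i. \<alpha> i + real (l i)) u (N - m) * f (\<lambda>i. l i + u i)))"
  proof (rule sum.cong[OF refl])
    fix u
    have "p_l d l (\<lambda>i. l i + u i) *
        (DM d \<alpha> (\<lambda>i. l i + u i) N * multinom d m l / ffact (real N) m * f (\<lambda>i. l i + u i))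
        = (DM d \<alpha> (\<lambda>i. l i + u i) N * (multinom d m l * p_l d l (\<lambda>i. l i + u i) / ffact (real N) m)) * f (\<lambda>i. l i + u i)"
      by (simp add: mult_ac)
    then show "p_l d l (\<lambda>i. l i + u i) *
        (DM d \<alpha> (\<lambda>i. l i + u i) N * multinom d m l / ffact (real N) m * f (\<lambda>i. l i + u i))
        = DM d \<alpha> l m * (DM d (\<lambda>i. \<alpha> i + real (l i)) u (N - m) * f (\<lambda>i. l i + u i))"
      unfolding DM_posterior[OF apos l mN] by (simp add: mult_ac)
  qed
  finally show ?thesis unfolding up_op_def by (simp add: sum_distrib_left)
qed

lemma chi_op_factor:
  assumes pos: "\<And>i. i < d \<Longrightarrow> \<alpha> i > 0" and apos: "abs_alpha d \<alpha> > 0" and mN: "m \<le> N"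
  shows "chi_op d \<alpha> N m f s = down_op d N m (up_op d \<alpha> N m f) s"
proof -
  define H where "H l r = multinom d m l * p_l d l r / ffact (real N) m" for l r
  have "chi_op d \<alpha> N m f s
      = (\<Sum>r\<in>simplex d N. \<Sum>l\<in>simplex d m. (1 / DM d \<alpha> l m) * H l s * (DM d \<alpha> r N * H l r * f r))"
    unfolding chi_op_def chiH_def H_def
    by (rule sum.cong[OF refl]) (simp add: sum_distrib_left sum_distrib_right mult_ac)
  also have "\<dots> = (\<Sum>l\<in>simplex d m. (1 / DM d \<alpha> l m) * H l s * (\<Sum>r\<in>simplex d N. DM d \<alpha> r N * H l r * f r))"
    by (subst sum.swap) (simp add: sum_distrib_left)
  also have "\<dots> = (\<Sum>l\<in>simplex d m. H l s * up_op d \<alpha> N m f l)"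
  proof (rule sum.cong[OF refl])
    fix l assume l: "l \<in> simplex d m"
    have "DM d \<alpha> l m \<noteq> 0" using DM_pos[OF pos apos] by (metis less_irrefl)
    then show "1 / DM d \<alpha> l m * H l s * (\<Sum>r\<in>simplex d N. DM d \<alpha> r N * H l r * f r) = H l s * up_op d \<alpha> N m f l"
      unfolding H_def weighted_p_l_sum[OF apos l mN] by simp
  qed
  finally show ?thesis unfolding down_op_def H_def by simp
qed

lemma up_op_rising_l:
  assumes apos: "abs_alpha d \<alpha> > 0" and mN: "m \<le> N" and l: "l \<in> simplex d m" and jk: "(\<Sum>i<d. j i) = k"
  shows "up_op d \<alpha> N m (rising_l d \<alpha> j) l
       = pochhammer (abs_alpha d \<alpha> + real N) k / pochhammer (abs_alpha d \<alpha> + real m) k * rising_l d \<alpha> j l"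
proof -
  let ?b = "\<lambda>i. \<alpha> i + real (l i)"
  have ab: "abs_alpha d ?b = abs_alpha d \<alpha> + real m"
    using l by (intro abs_alpha_shift) (simp add: simplex_def)
  have bpos: "abs_alpha d ?b > 0" using ab apos by simp
  have total: "(\<Sum>u\<in>simplex d (N-m). DM d (\<lambda>i. ?b i + real (j i)) u (N-m)) = 1"
  proof (rule sum_DM_eq_1)
    show "pochhammer (abs_alpha d (\<lambda>i. ?b i + real (j i))) (N - m) \<noteq> 0"
      unfolding abs_alpha_shift[OF jk] using bpos
      by (metis add_pos_nonneg of_nat_0_le_iff pochhammer_pos less_irrefl)
  qed
  have "up_op d \<alpha> N m (rising_l d \<alpha> j) l
      = (\<Sum>u\<in>simplex d (N-m). DM d ?b u (N-m) * (\<Prod>i<d. pochhammer (?b i + real (u i)) (j i)))"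
    unfolding up_op_def rising_l_def by (simp add: add.assoc)
  also have "\<dots> = (\<Prod>i<d. pochhammer (?b i) (j i)) *
        (pochhammer (abs_alpha d ?b + real (N-m)) k / pochhammer (abs_alpha d ?b) k) *
        (\<Sum>u\<in>simplex d (N-m). DM d (\<lambda>i. ?b i + real (j i)) u (N-m))"
    unfolding DM_rising_shift[OF bpos jk] by (simp add: sum_distrib_left)
  also have "abs_alpha d ?b + real (N - m) = abs_alpha d \<alpha> + real N" using ab mN by (simp add: of_nat_diff)
  finally show ?thesis unfolding ab rising_l_def total by (simp add: mult_ac)
qed

lemma down_op_cong: "(\<And>l. l \<in> simplex d m \<Longrightarrow> g l = g' l) \<Longrightarrow> down_op d N m g s = down_op d N m g' s"
  unfolding down_op_def by (rule sum.cong) auto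

lemma down_op_scale: "down_op d N m (\<lambda>l. a * g l) s = a * down_op d N m g s"
  unfolding down_op_def by (simp add: sum_distrib_left mult_ac)

lemma down_op_diff: "down_op d N m (\<lambda>l. g l - g' l) s = down_op d N m g s - down_op d N m g' s"
  unfolding down_op_def by (simp add: sum_subtractf right_diff_distrib)

lemma down_op_sum: "finite I \<Longrightarrow> down_op d N m (\<lambda>l. \<Sum>b\<in>I. G b l) s = (\<Sum>b\<in>I. down_op d N m (G b) s)"
  unfolding down_op_def by (simp add: sum_distrib_left sum.swap[of _ I])

text \<open>The summand of \<open>D\<^sub>m p\<^sub>b\<close> after the shift \<open>l = b + v\<close>: the factorial moments
  \<open>p\<^sub>b\<close> of a hypergeometric sample factor as \<open>p\<^sub>b(s)\<close> times falling factorials of \<open>s - b\<close>.\<close>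

lemma down_op_p_l_summand:
  assumes "k \<le> m"
  shows "p_l d b (\<lambda>i. b i + v i) * (multinom d m (\<lambda>i. b i + v i) * p_l d (\<lambda>i. b i + v i) s / ffact (real N) m)
       = ffact (real m) k * p_l d b s / ffact (real N) m *
         (multinom d (m-k) v * (\<Prod>i<d. ffact (real (s i) - real (b i)) (v i)))"
proof -
  define FV where "FV = (\<Prod>i<d. fact (v i) :: real)"
  define FBV where "FBV = (\<Prod>i<d. fact (b i + v i) :: real)"
  have pb: "p_l d b (\<lambda>i. b i + v i) = FBV / FV"
    unfolding p_l_def FBV_def FV_def prod_dividef[symmetric]
    by (rule prod.cong[OF refl]) (metis ffact_of_nat le_add1 add_diff_cancel_left')
  have pbs: "p_l d (\<lambda>i. b i + v i) s = p_l d b s * (\<Prod>i<d. ffact (real (s i) - real (b i)) (v i))"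
    unfolding p_l_def prod.distrib[symmetric] by (rule prod.cong[OF refl]) (simp add: ffact_add)
  have fm: "ffact (real m) k = fact m / fact (m - k)" using assms by (simp add: ffact_of_nat)
  have nz: "FV \<noteq> 0" "FBV \<noteq> 0" unfolding FV_def FBV_def by auto
  show ?thesis
    unfolding pb pbs fm multinom_def FV_def[symmetric] FBV_def[symmetric]
    using nz by (simp add: field_simps)
qed

lemma down_op_p_l:
  assumes s: "s \<in> simplex d N" and b: "\<forall>i. d \<le> i \<longrightarrow> b i = 0" and bk: "(\<Sum>i<d. b i) = k"
    and mN: "m \<le> N"
  shows "down_op d N m (p_l d b) s = ffact (real m) k / ffact (real N) k * p_l d b s"
proof -
  have D: "down_op d N m (p_l d b) s
      = (\<Sum>l\<in>simplex d m. p_l d b l * (multinom d m l * p_l d l s / ffact (real N) m))"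
    unfolding down_op_def by (simp add: mult_ac)
  show ?thesis
  proof (cases "k \<le> m")
    case False
    then have "(\<Sum>l\<in>simplex d m. p_l d b l * (multinom d m l * p_l d l s / ffact (real N) m)) = 0"
      by (intro sum_simplex_shift_eq_0[OF bk]) simp
    then show ?thesis unfolding D using False by (simp add: ffact_of_nat_eq_0)
  next
    case True
    have sum_sb: "(\<Sum>i<d. real (s i) - real (b i)) = real N - real k"
      using s bk by (simp add: sum_subtractf simplex_def flip: of_nat_sum)
    have split: "ffact (real N) m = ffact (real N) k * ffact (real N - real k) (m - k)"
      using ffact_add[of "real N" k "m - k"] True by simp
    have nz: "ffact (real N - real k) (m - k) \<noteq> 0"
      using True mN by (simp add: ffact_of_nat flip: of_nat_diff)
    have "down_op d N m (p_l d b) s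
        = (\<Sum>v\<in>simplex d (m-k). ffact (real m) k * p_l d b s / ffact (real N) m *
            (multinom d (m-k) v * (\<Prod>i<d. ffact (real (s i) - real (b i)) (v i))))"
      unfolding D sum_simplex_shift[OF b bk True]
      by (rule sum.cong[OF refl]) (rule down_op_p_l_summand[OF True])
    also have "\<dots> = ffact (real m) k * p_l d b s / ffact (real N) m * ffact (real N - real k) (m - k)"
      by (simp only: sum_distrib_left[symmetric] multinomial_ffact sum_sb)
    finally show ?thesis using nz unfolding split by simp
  qed
qed

text \<open>Consequently \<open>D\<^sub>m\<close> does not raise the degree: expand in monomials and induct on the
  degree, using that \<open>p\<^sub>b\<close> equals \<open>r^b\<close> up to lower-degree terms.\<close>

lemma down_op_polys_lt:
  assumes mN: "m \<le> N"
  shows "g \<in> polys_lt d m k \<Longrightarrow> down_op d N m g \<in> polys_lt d N k"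
proof (induction k arbitrary: g rule: less_induct)
  case (less k)
  obtain c where c: "\<forall>l\<in>simplex d m. g l = (\<Sum>b\<in>midx_lt d k. c b * Defs.monom d b l)"
    using less.prems unfolding polys_lt_def by auto
  have monom_case: "down_op d N m (Defs.monom d b) \<in> polys_lt d N k" if b: "b \<in> midx_lt d k" for b
  proof -
    define j where "j = (\<Sum>i<d. b i)"
    have jk: "j < k" and bs: "\<forall>i. d \<le> i \<longrightarrow> b i = 0" using b unfolding midx_lt_def j_def by auto
    have lower: "down_op d N m (\<lambda>l. p_l d b l - Defs.monom d b l) \<in> polys_lt d N j"
      using less.IH[OF jk] p_l_leading(2)[of d b m] unfolding j_def by blast
    have top: "(\<lambda>s. ffact (real m) j / ffact (real N) j * p_l d b s) \<in> polys_lt d N k"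
      using polys_lt_mono[OF polys_lt_scale[OF p_l_leading(1)[of d b N]], of k "ffact (real m) j / ffact (real N) j"]
        jk unfolding j_def by simp
    have "(\<lambda>s. ffact (real m) j / ffact (real N) j * p_l d b s - down_op d N m (\<lambda>l. p_l d b l - Defs.monom d b l) s)
        \<in> polys_lt d N k"
      using polys_lt_diff[OF top polys_lt_mono[OF lower]] jk by simp
    then show ?thesis
      by (rule polys_lt_cong) (simp add: down_op_diff down_op_p_l[OF _ bs j_def[symmetric] mN])
  qed
  have "(\<lambda>s. \<Sum>b\<in>midx_lt d k. c b * down_op d N m (Defs.monom d b) s) \<in> polys_lt d N k"
    by (intro polys_lt_sum[OF finite_midx_lt] polys_lt_scale monom_case)
  moreover have "down_op d N m g s = (\<Sum>b\<in>midx_lt d k. c b * down_op d N m (Defs.monom d b) s)" for s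
    using c by (simp add: down_op_cong[of d m g] down_op_sum[OF finite_midx_lt] down_op_scale)
  ultimately show ?case by (rule polys_lt_cong)
qed

definition chi_eigenvalue :: "real \<Rightarrow> nat \<Rightarrow> nat \<Rightarrow> nat \<Rightarrow> real" where
  "chi_eigenvalue \<theta> N m k =
     pochhammer (\<theta> + real N) k / pochhammer (\<theta> + real m) k * (ffact (real m) k / ffact (real N) k)"

lemma chi_op_triangular:
  assumes pos: "\<And>i. i < d \<Longrightarrow> \<alpha> i > 0" and apos: "abs_alpha d \<alpha> > 0" and mN: "m \<le> N"
    and js: "\<forall>i. d \<le> i \<longrightarrow> j i = 0" and jk: "(\<Sum>i<d. j i) = k"
  shows "(\<lambda>s. chi_op d \<alpha> N m (rising_l d \<alpha> j) s - chi_eigenvalue (abs_alpha d \<alpha>) N m k * rising_l d \<alpha> j s)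
           \<in> polys_lt d N k"
proof -
  define cU where "cU = pochhammer (abs_alpha d \<alpha> + real N) k / pochhammer (abs_alpha d \<alpha> + real m) k"
  define cD where "cD = ffact (real m) k / ffact (real N) k"
  have qp: "(\<lambda>l. rising_l d \<alpha> j l - p_l d j l) \<in> polys_lt d M k" for M
    using polys_lt_diff[OF rising_l_leading(2)[of d \<alpha> j M] p_l_leading(2)[of d j M]] jk by simp
  have "(\<lambda>s. cU * down_op d N m (\<lambda>l. rising_l d \<alpha> j l - p_l d j l) s - cU * cD * (rising_l d \<alpha> j s - p_l d j s))
          \<in> polys_lt d N k"
    by (intro polys_lt_diff polys_lt_scale down_op_polys_lt[OF mN] qp)
  then show ?thesis
  proof (rule polys_lt_cong)
    fix s assume s: "s \<in> simplex d N"
    have "chi_op d \<alpha> N m (rising_l d \<alpha> j) s = down_op d N m (up_op d \<alpha> N m (rising_l d \<alpha> j)) s"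
      by (rule chi_op_factor[OF pos apos mN])
    also have "\<dots> = down_op d N m (\<lambda>l. cU * rising_l d \<alpha> j l) s"
      unfolding cU_def by (rule down_op_cong) (simp add: up_op_rising_l[OF apos mN _ jk])
    also have "\<dots> = cU * (down_op d N m (p_l d j) s + down_op d N m (\<lambda>l. rising_l d \<alpha> j l - p_l d j l) s)"
      by (simp add: down_op_scale down_op_diff)
    also have "down_op d N m (p_l d j) s = cD * p_l d j s"
      unfolding cD_def by (rule down_op_p_l[OF s js jk mN])
    finally show "chi_op d \<alpha> N m (rising_l d \<alpha> j) s - chi_eigenvalue (abs_alpha d \<alpha>) N m k * rising_l d \<alpha> j s
        = cU * down_op d N m (\<lambda>l. rising_l d \<alpha> j l - p_l d j l) s - cU * cD * (rising_l d \<alpha> j s - p_l d j s)"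
      unfolding chi_eigenvalue_def cU_def[symmetric] cD_def[symmetric] by (simp add: algebra_simps)
  qed
qed

lemma chiH_polys_lt: "(\<lambda>r. chiH d \<alpha> N m r s) \<in> polys_lt d N (Suc m)"
proof -
  have "(\<lambda>r. \<Sum>l\<in>simplex d m. (1 / DM d \<alpha> l m) * (multinom d m l * p_l d l s / ffact (real N) m)
          * (multinom d m l / ffact (real N) m) * p_l d l r) \<in> polys_lt d N (Suc m)"
  proof (rule polys_lt_sum[OF finite_simplex], rule polys_lt_scale)
    fix l assume "l \<in> simplex d m"
    then show "p_l d l \<in> polys_lt d N (Suc m)" using p_l_leading(1)[of d l N] by (simp add: simplex_def)
  qed
  then show ?thesis by (rule polys_lt_cong) (simp add: chiH_def mult_ac)
qed

text \<open>An \<open>M\<close>-th finite difference annihilates polynomials of degree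
  \<open>< M\<close>; we need it for the rising factorials \<open>i \<mapsto> (c+i)\<^sub>(\<^sub>L\<^sub>)\<close>.\<close>

lemma alternating_binomial_Suc:
  fixes f :: "nat \<Rightarrow> real"
  shows "(\<Sum>i\<le>Suc M. (-1)^i * real (Suc M choose i) * f i)
       = - (\<Sum>i\<le>M. (-1)^i * real (M choose i) * (f (Suc i) - f i))"
proof -
  let ?A = "\<Sum>i\<le>M. (-1)^i * real (M choose i) * f i"
  let ?A' = "\<Sum>i\<le>M. (-1)^i * real (M choose i) * f (Suc i)"
  let ?B = "\<Sum>i\<le>M. (-1)^i * real (M choose Suc i) * f (Suc i)"
  have L: "(\<Sum>i\<le>Suc M. (-1)^i * real (Suc M choose i) * f i) = f 0 - ?A' - ?B"
    by (subst sum.atMost_Suc_shift) (simp add: algebra_simps sum.distrib sum_negf sum_subtractf)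
  have "?A = (\<Sum>i\<le>Suc M. (-1)^i * real (M choose i) * f i)" by simp
  also have "\<dots> = f 0 - ?B"
    by (subst sum.atMost_Suc_shift) (simp add: sum_negf)
  finally have B: "?B = f 0 - ?A" by simp
  show ?thesis unfolding L B by (simp add: algebra_simps sum_subtractf)
qed

lemma alternating_binomial_pochhammer:
  "L < M \<Longrightarrow> (\<Sum>i\<le>M. (-1)^i * real (M choose i) * pochhammer (c + real i) L) = 0"
proof (induction M arbitrary: L c)
  case 0 then show ?case by simp
next
  case (Suc M)
  have "(\<Sum>i\<le>Suc M. (-1)^i * real (Suc M choose i) * pochhammer (c + real i) L)
      = - (\<Sum>i\<le>M. (-1)^i * real (M choose i) * (pochhammer (c + real (Suc i)) L - pochhammer (c + real i) L))"
    by (rule alternating_binomial_Suc)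
  also have "\<dots> = 0"
  proof (cases L)
    case 0 then show ?thesis by simp
  next
    case (Suc L')
    have diff: "pochhammer (c + real (Suc i)) L - pochhammer (c + real i) L = real L * pochhammer ((c + 1) + real i) L'" for i
    proof -
      have "pochhammer (c + real i) L = (c + real i) * pochhammer (c + real i + 1) L'"
        unfolding Suc by (rule pochhammer_rec)
      moreover have "pochhammer (c + real (Suc i)) L = pochhammer (c + real i + 1) L' * (c + real i + 1 + real L')"
        unfolding Suc by (simp add: pochhammer_rec' add_ac)
      ultimately show ?thesis unfolding Suc by (simp add: algebra_simps)
    qed
    have "(\<Sum>i\<le>M. (-1)^i * real (M choose i) * pochhammer ((c + 1) + real i) L') = 0"
      using Suc.IH[of L' "c+1"] Suc.prems \<open>L = Suc L'\<close> by simp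
    then show ?thesis unfolding diff by (simp add: sum_distrib_left[symmetric] mult_ac)
  qed
  finally show ?case .
qed

lemma a_coef_diag:
  assumes th: "\<theta> > 0"
  shows "a_coef \<theta> n n * ffact (real n) n / pochhammer (\<theta> + real n) n = 1"
proof (cases "n = 0")
  case True then show ?thesis by (simp add: a_coef_def ffact_def)
next
  case False
  have "n = Suc (n - 1)" using False by simp
  then have "pochhammer (\<theta> + real n) n = pochhammer (\<theta> + real n) (n - 1) * (\<theta> + real n + real (n - 1))"
    by (metis pochhammer_Suc)
  then have pn: "pochhammer (\<theta> + real n) n = pochhammer (\<theta> + real n) (n - 1) * (\<theta> + 2 * real n - 1)"
    using False by (simp add: of_nat_diff)
  have ac: "a_coef \<theta> n n = (\<theta> + 2 * real n - 1) * pochhammer (\<theta> + real n) (n - 1) / fact n"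
    using False by (simp add: a_coef_def)
  have "\<theta> + 2 * real n - 1 > 0" "pochhammer (\<theta> + real n) (n - 1) > 0"
    using False th by (auto intro: pochhammer_pos)
  then show ?thesis unfolding pn ac by (simp add: ffact_of_nat)
qed

text \<open>For \<open>n = k + M\<close> with \<open>M > 0\<close>, the terms of the identity are, up to a common factor, the
  terms of an \<open>M\<close>-th finite difference of a rising factorial of degree \<open>M - 1\<close>.\<close>

lemma a_coef_offdiag_term:
  assumes th: "\<theta> > 0" and i: "i \<le> M" and M: "0 < M"
  shows "a_coef \<theta> (k + M) (k + i) * ffact (real (k + i)) k / pochhammer (\<theta> + real (k + i)) k
       = (\<theta> + 2 * real (k + M) - 1) * (-1)^M / fact M *
         ((-1)^i * real (M choose i) * pochhammer (\<theta> + 2 * real k + real i) (M - 1))"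
proof -
  have sgn: "(-1::real)^(M - i) = (-1)^M * (-1)^i"
  proof -
    have e1: "(-1::real)^M = (-1)^(M-i) * (-1)^i" using i by (simp flip: power_add)
    have e2: "(-1::real)^i * (-1)^i = 1" by (simp flip: power_mult_distrib)
    show ?thesis unfolding e1 mult.assoc e2 by simp
  qed
  have ff: "ffact (real (k + i)) k = fact (k + i) / fact i"
    using ffact_of_nat[of k "k + i"] by simp
  have pc: "pochhammer (\<theta> + real (k + i)) (k + M - 1)
      = pochhammer (\<theta> + real (k + i)) k * pochhammer (\<theta> + 2 * real k + real i) (M - 1)"
  proof -
    have "k + M - 1 = k + (M - 1)" using M by simp
    then show ?thesis by (simp add: pochhammer_product' add_ac)
  qed
  have ch: "real (M choose i) = fact M / (fact i * fact (M - i))"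
    using i by (simp add: binomial_fact)
  have ac: "a_coef \<theta> (k + M) (k + i) = (\<theta> + 2 * real (k + M) - 1) * (-1)^(M - i) *
      pochhammer (\<theta> + real (k + i)) (k + M - 1) / (fact (k + i) * fact (M - i))"
    using M by (simp add: a_coef_def)
  have p0: "pochhammer (\<theta> + real (k + i)) k > 0" using th by (intro pochhammer_pos) simp
  have field: "\<And>X S s Pk Q Fki FMi Fi FM::real. Pk \<noteq> 0 \<Longrightarrow> Fki \<noteq> 0 \<Longrightarrow> FMi \<noteq> 0 \<Longrightarrow> Fi \<noteq> 0 \<Longrightarrow> FM \<noteq> 0 \<Longrightarrow>
      X * (S * s) * (Pk * Q) / (Fki * FMi) * (Fki / Fi) / Pk = X * S / FM * (s * (FM / (Fi * FMi)) * Q)"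
    by (simp add: field_simps)
  show ?thesis unfolding ac sgn pc ff ch by (rule field) (use p0 in auto)
qed

text \<open>The defining property of the coefficients \<open>a\<^sub>n\<^sub>m\<close>: for \<open>k \<le> n\<close>,
  \<open>\<Sum>\<^sub>m a\<^sub>n\<^sub>m m\<^sub>[\<^sub>k\<^sub>]/(\<theta>+m)\<^sub>(\<^sub>k\<^sub>) = \<delta>\<^sub>k\<^sub>n\<close>.\<close>

lemma a_coef_identity:
  assumes th: "\<theta> > 0" and kn: "k \<le> n"
  shows "(\<Sum>m\<le>n. a_coef \<theta> n m * ffact (real m) k / pochhammer (\<theta> + real m) k) = (if k = n then 1 else 0)"
proof -
  define F where "F m = a_coef \<theta> n m * ffact (real m) k / pochhammer (\<theta> + real m) k" for m
  have below: "F m = 0" if "m < k" for m unfolding F_def using that by (simp add: ffact_of_nat_eq_0)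
  have "(\<Sum>m\<le>n. F m) = (\<Sum>m\<in>{k..n}. F m)"
    by (rule sum.mono_neutral_right) (auto simp: below)
  also have "\<dots> = (\<Sum>i\<le>n - k. F (k + i))"
    using sum.shift_bounds_cl_nat_ivl[of F 0 k "n - k"] kn by (simp add: atLeast0AtMost add.commute)
  finally have shifted: "(\<Sum>m\<le>n. F m) = (\<Sum>i\<le>n - k. F (k + i))" .
  show ?thesis
  proof (cases "k = n")
    case True
    then show ?thesis using shifted a_coef_diag[OF th, of n] by (simp add: F_def)
  next
    case False
    define M where "M = n - k"
    have M: "0 < M" and n: "n = k + M" using False kn unfolding M_def by auto
    have "(\<Sum>i\<le>M. F (k + i)) = (\<theta> + 2 * real n - 1) * (-1)^M / fact M *
        (\<Sum>i\<le>M. (-1)^i * real (M choose i) * pochhammer (\<theta> + 2 * real k + real i) (M - 1))"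
      unfolding sum_distrib_left n F_def by (intro sum.cong refl a_coef_offdiag_term[OF th _ M]) simp
    also have "\<dots> = 0" using alternating_binomial_pochhammer[of "M - 1" M] M by simp
    finally show ?thesis using False shifted unfolding F_def M_def by simp
  qed
qed

lemma ipDM_self_eq_0:
  assumes pos: "\<And>i. i < d \<Longrightarrow> \<alpha> i > 0" and apos: "abs_alpha d \<alpha> > 0"
    and h: "ipDM d \<alpha> N h h = 0" and s: "s \<in> simplex d N"
  shows "h s = 0"
proof -
  have nonneg: "\<forall>x\<in>simplex d N. 0 \<le> DM d \<alpha> x N * h x * h x"
    using DM_pos[OF pos apos] by (simp add: mult.assoc less_imp_le)
  have "(\<Sum>x\<in>simplex d N. DM d \<alpha> x N * h x * h x) = 0" using h unfolding ipDM_def .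
  then have "\<forall>x\<in>simplex d N. DM d \<alpha> x N * h x * h x = 0"
    using nonneg by (simp add: sum_nonneg_eq_0_iff[OF finite_simplex])
  then have "DM d \<alpha> s N * h s * h s = 0" using s by blast
  then show ?thesis using DM_pos[OF pos apos, of s N] by simp
qed

lemma onb_kernel_unique:
  assumes onb: "is_onb d \<alpha> N n Ps" and G: "G \<in> orth_polys d \<alpha> N n"
    and reproduces: "\<And>j. j < length Ps \<Longrightarrow> ipDM d \<alpha> N G (Ps!j) = (Ps!j) s"
    and r: "r \<in> simplex d N"
  shows "(\<Sum>k<length Ps. (Ps!k) r * (Ps!k) s) = G r"
proof -
  have orthonormal: "\<forall>j<length Ps. \<forall>k<length Ps. ipDM d \<alpha> N (Ps!j) (Ps!k) = (if j = k then 1 else 0)"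
    and spans: "\<forall>f\<in>orth_polys d \<alpha> N n. \<exists>c. \<forall>r\<in>simplex d N. f r = (\<Sum>k<length Ps. c k * (Ps!k) r)"
    using onb unfolding is_onb_def by simp_all
  obtain c where c: "\<forall>x\<in>simplex d N. G x = (\<Sum>k<length Ps. c k * (Ps!k) x)"
    using bspec[OF spans G] by (elim exE)
  have coef: "c j = (Ps!j) s" if j: "j < length Ps" for j
  proof -
    have "ipDM d \<alpha> N G (Ps!j) = (\<Sum>x\<in>simplex d N. DM d \<alpha> x N * (\<Sum>k<length Ps. c k * (Ps!k) x) * (Ps!j) x)"
      unfolding ipDM_def using c by (intro sum.cong) auto
    also have "\<dots> = (\<Sum>k<length Ps. c k * ipDM d \<alpha> N (Ps!k) (Ps!j))"
      unfolding ipDM_def sum_distrib_left sum_distrib_right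
      by (subst sum.swap) (simp add: mult_ac)
    also have "\<dots> = (\<Sum>k<length Ps. if k = j then c k else 0)"
      using orthonormal j by (intro sum.cong) auto
    finally show ?thesis using reproduces[OF j] j by simp
  qed
  show ?thesis using c r coef by (simp add: mult.commute)
qed

text \<open>From now on \<open>G\<close> is the candidate kernel (the right-hand side of the theorem) and \<open>B\<close>
  the integral operator with kernel \<open>G\<close>.  By linearity \<open>B = \<Sum>\<^sub>m c\<^sub>m A\<^sub>m\<close>, so \<open>B\<close> is triangular
  with diagonal \<open>\<mu>\<^sub>k = \<Sum>\<^sub>m c\<^sub>m \<lambda>\<^sub>m\<^sub>k\<close>, which is \<open>\<delta>\<^sub>k\<^sub>n\<close> by the coefficient identity.\<close>

context
  fixes d N n :: nat and \<alpha> :: "nat \<Rightarrow> real"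
  assumes pos: "\<And>i. i < d \<Longrightarrow> \<alpha> i > 0" and apos: "abs_alpha d \<alpha> > 0" and nN: "n \<le> N"
begin

definition hahn_kernel :: "(nat \<Rightarrow> nat) \<Rightarrow> (nat \<Rightarrow> nat) \<Rightarrow> real" where
  "hahn_kernel r s = ffact (real N) n / pochhammer (abs_alpha d \<alpha> + real N) n
         * (\<Sum>m\<le>n. a_coef (abs_alpha d \<alpha>) n m * chiH d \<alpha> N m r s)"

definition kernel_op :: "((nat \<Rightarrow> nat) \<Rightarrow> real) \<Rightarrow> (nat \<Rightarrow> nat) \<Rightarrow> real" where
  "kernel_op f s = ipDM d \<alpha> N (\<lambda>r. hahn_kernel r s) f"

definition kernel_coef :: "nat \<Rightarrow> real" where
  "kernel_coef m = ffact (real N) n / pochhammer (abs_alpha d \<alpha> + real N) n * a_coef (abs_alpha d \<alpha>) n m"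

definition kernel_eigenvalue :: "nat \<Rightarrow> real" where
  "kernel_eigenvalue k = (\<Sum>m\<le>n. kernel_coef m * chi_eigenvalue (abs_alpha d \<alpha>) N m k)"

lemma kernel_op_chi_op: "kernel_op f s = (\<Sum>m\<le>n. kernel_coef m * chi_op d \<alpha> N m f s)"
proof -
  have "kernel_op f s = (\<Sum>r\<in>simplex d N. \<Sum>m\<le>n. kernel_coef m * (DM d \<alpha> r N * chiH d \<alpha> N m r s * f r))"
    unfolding kernel_op_def ipDM_def hahn_kernel_def kernel_coef_def
    by (rule sum.cong[OF refl]) (simp add: sum_distrib_left sum_distrib_right mult_ac)
  also have "\<dots> = (\<Sum>m\<le>n. kernel_coef m * chi_op d \<alpha> N m f s)"
    unfolding chi_op_def by (subst sum.swap) (simp add: sum_distrib_left)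
  finally show ?thesis .
qed

lemma kernel_op_cong: "(\<And>r. r \<in> simplex d N \<Longrightarrow> f r = g r) \<Longrightarrow> kernel_op f s = kernel_op g s"
  unfolding kernel_op_def ipDM_def by (rule sum.cong) auto

lemma kernel_op_diff: "kernel_op (\<lambda>r. f r - g r) s = kernel_op f s - kernel_op g s"
  unfolding kernel_op_def ipDM_def by (simp add: sum_subtractf right_diff_distrib)

lemma kernel_op_scale: "kernel_op (\<lambda>r. a * f r) s = a * kernel_op f s"
  unfolding kernel_op_def ipDM_def by (simp add: sum_distrib_left mult_ac)

lemma kernel_op_sum: "finite I \<Longrightarrow> kernel_op (\<lambda>r. \<Sum>b\<in>I. F b r) s = (\<Sum>b\<in>I. kernel_op (F b) s)"
  unfolding kernel_op_def ipDM_def sum_distrib_left by (rule sum.swap)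

text \<open>\<open>B\<close> is self-adjoint, since its kernel is symmetric.\<close>

lemma kernel_op_selfadjoint: "ipDM d \<alpha> N (kernel_op f) g = ipDM d \<alpha> N f (kernel_op g)"
proof -
  have sym: "hahn_kernel r s = hahn_kernel s r" for r s
    unfolding hahn_kernel_def chiH_def by (simp add: mult_ac)
  have "ipDM d \<alpha> N (kernel_op f) g
      = (\<Sum>s\<in>simplex d N. \<Sum>r\<in>simplex d N. DM d \<alpha> s N * DM d \<alpha> r N * hahn_kernel r s * f r * g s)"
    unfolding kernel_op_def ipDM_def by (rule sum.cong[OF refl]) (simp add: sum_distrib_left sum_distrib_right mult_ac)
  also have "\<dots> = ipDM d \<alpha> N f (kernel_op g)"
    unfolding kernel_op_def ipDM_def
    by (subst sum.swap) (rule sum.cong[OF refl], simp add: sum_distrib_left sym mult_ac)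
  finally show ?thesis .
qed

lemma kernel_eigenvalue_delta: "k \<le> n \<Longrightarrow> kernel_eigenvalue k = (if k = n then 1 else 0)"
proof -
  assume kn: "k \<le> n"
  let ?t = "abs_alpha d \<alpha>"
  have "kernel_eigenvalue k = ffact (real N) n / pochhammer (?t + real N) n * (pochhammer (?t + real N) k / ffact (real N) k)
     * (\<Sum>m\<le>n. a_coef ?t n m * ffact (real m) k / pochhammer (?t + real m) k)"
    unfolding kernel_eigenvalue_def sum_distrib_left
    by (rule sum.cong[OF refl]) (simp add: kernel_coef_def chi_eigenvalue_def divide_inverse mult_ac)
  moreover have "ffact (real N) n \<noteq> 0" using nN by (simp add: ffact_of_nat)
  moreover have "pochhammer (?t + real N) n > 0" using apos by (intro pochhammer_pos) simp
  ultimately show ?thesis using a_coef_identity[OF apos kn] by auto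
qed

lemma kernel_op_rising_l:
  assumes js: "\<forall>i. d \<le> i \<longrightarrow> j i = 0" and jk: "(\<Sum>i<d. j i) = k"
  shows "(\<lambda>s. kernel_op (rising_l d \<alpha> j) s - kernel_eigenvalue k * rising_l d \<alpha> j s) \<in> polys_lt d N k"
proof -
  have "(\<lambda>s. \<Sum>m\<le>n. kernel_coef m *
          (chi_op d \<alpha> N m (rising_l d \<alpha> j) s - chi_eigenvalue (abs_alpha d \<alpha>) N m k * rising_l d \<alpha> j s))
        \<in> polys_lt d N k"
    using nN by (intro polys_lt_sum polys_lt_scale chi_op_triangular[OF pos apos _ js jk]) auto
  then show ?thesis
    by (rule polys_lt_cong)
       (simp add: kernel_op_chi_op kernel_eigenvalue_def right_diff_distrib sum_subtractf sum_distrib_left mult_ac)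
qed

text \<open>The leading term of \<open>B r^b\<close> for \<open>|b| = k\<close>, provided \<open>B\<close> is already known to preserve
  degree \<open>< k\<close>: pass from \<open>r^b\<close> to \<open>q\<^sub>b\<close>, which differs from it in lower degree.\<close>

lemma kernel_op_monom_top:
  assumes pres: "\<And>g. g \<in> polys_lt d N k \<Longrightarrow> kernel_op g \<in> polys_lt d N k"
    and bs: "\<forall>i. d \<le> i \<longrightarrow> b i = 0" and bk: "(\<Sum>i<d. b i) = k"
  shows "(\<lambda>s. kernel_op (Defs.monom d b) s - kernel_eigenvalue k * Defs.monom d b s) \<in> polys_lt d N k"
proof -
  have lower: "(\<lambda>r. rising_l d \<alpha> b r - Defs.monom d b r) \<in> polys_lt d N k"
    using rising_l_leading(2)[of d \<alpha> b N] bk by simp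
  have "(\<lambda>s. (kernel_op (rising_l d \<alpha> b) s - kernel_eigenvalue k * rising_l d \<alpha> b s)
            - kernel_op (\<lambda>r. rising_l d \<alpha> b r - Defs.monom d b r) s
            + kernel_eigenvalue k * (rising_l d \<alpha> b s - Defs.monom d b s)) \<in> polys_lt d N k"
    by (intro polys_lt_add polys_lt_diff polys_lt_scale kernel_op_rising_l[OF bs bk] pres lower)
  then show ?thesis by (rule polys_lt_cong) (simp add: kernel_op_diff algebra_simps)
qed

lemma kernel_op_triangular:
  "k \<le> n \<Longrightarrow> f \<in> polys_lt d N (Suc k) \<Longrightarrow> (\<lambda>s. kernel_op f s - kernel_eigenvalue k * f s) \<in> polys_lt d N k"
proof (induction k arbitrary: f rule: less_induct)
  case (less k)
  have pres_lower: "kernel_op g \<in> polys_lt d N (Suc j)" if "j < k" "g \<in> polys_lt d N (Suc j)" for j g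
  proof -
    have "(\<lambda>s. kernel_op g s - kernel_eigenvalue j * g s) \<in> polys_lt d N j"
      using less.IH[of j g] that less.prems by simp
    then have "(\<lambda>s. kernel_op g s - kernel_eigenvalue j * g s) \<in> polys_lt d N (Suc j)"
      by (rule polys_lt_mono) simp
    then have "(\<lambda>s. (kernel_op g s - kernel_eigenvalue j * g s) + kernel_eigenvalue j * g s) \<in> polys_lt d N (Suc j)"
      by (intro polys_lt_add polys_lt_scale that(2))
    then show ?thesis by simp
  qed
  have pres: "kernel_op g \<in> polys_lt d N k" if "g \<in> polys_lt d N k" for g
  proof (cases k)
    case 0
    have "g r = 0" if "r \<in> simplex d N" for r
      using polys_lt_0_eq_0[OF \<open>g \<in> polys_lt d N k\<close>[unfolded 0] that] .
    then have "kernel_op g s = 0" for s by (simp add: kernel_op_def ipDM_def)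
    then show ?thesis by (intro polys_lt_zero)
  next
    case (Suc k')
    then show ?thesis using pres_lower[of k' g] that by simp
  qed
  have monom_case: "(\<lambda>s. kernel_op (Defs.monom d b) s - kernel_eigenvalue k * Defs.monom d b s) \<in> polys_lt d N k"
    if b: "b \<in> midx_lt d (Suc k)" for b
  proof -
    define j where "j = (\<Sum>i<d. b i)"
    have jk: "j \<le> k" and bs: "\<forall>i. d \<le> i \<longrightarrow> b i = 0" using b unfolding midx_lt_def j_def by auto
    have mb: "Defs.monom d b \<in> polys_lt d N (Suc j)" unfolding j_def by (rule polys_lt_monom[OF bs]) simp
    show ?thesis
    proof (cases "j < k")
      case True
      have "kernel_op (Defs.monom d b) \<in> polys_lt d N k" "Defs.monom d b \<in> polys_lt d N k"
        using polys_lt_mono[OF pres_lower[OF True mb]] polys_lt_mono[OF mb] True by auto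
      then show ?thesis by (intro polys_lt_diff polys_lt_scale)
    next
      case False
      then show ?thesis using kernel_op_monom_top[OF pres bs] jk unfolding j_def by simp
    qed
  qed
  obtain c where c: "\<forall>r\<in>simplex d N. f r = (\<Sum>b\<in>midx_lt d (Suc k). c b * Defs.monom d b r)"
    using less.prems(2) unfolding polys_lt_def by auto
  have combination: "(\<lambda>s. \<Sum>b\<in>midx_lt d (Suc k).
        c b * (kernel_op (Defs.monom d b) s - kernel_eigenvalue k * Defs.monom d b s)) \<in> polys_lt d N k"
    by (intro polys_lt_sum[OF finite_midx_lt] polys_lt_scale monom_case)
  have expand: "kernel_op f s = (\<Sum>b\<in>midx_lt d (Suc k). c b * kernel_op (Defs.monom d b) s)" for s
    using c by (simp add: kernel_op_cong[of f] kernel_op_sum[OF finite_midx_lt] kernel_op_scale)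
  show ?case
    by (rule polys_lt_cong[OF combination]) (simp add: expand c algebra_simps sum_subtractf sum_distrib_left)
qed

text \<open>Since \<open>\<mu>\<^sub>k = 0\<close> for \<open>k < n\<close>, \<open>B\<close> maps degree \<open>\<le> k\<close> into degree \<open>< k\<close>; by
  self-adjointness and induction on \<open>k\<close>, \<open>\<langle>Bf, Bf\<rangle> = \<langle>f, B(Bf)\<rangle> = 0\<close>, so \<open>B\<close> kills all
  polynomials of degree \<open>< n\<close>.\<close>

lemma kernel_op_vanishes:
  "k < n \<Longrightarrow> f \<in> polys_lt d N (Suc k) \<Longrightarrow> s \<in> simplex d N \<Longrightarrow> kernel_op f s = 0"
proof (induction k arbitrary: f s)
  case 0
  have "(\<lambda>s. kernel_op f s - kernel_eigenvalue 0 * f s) \<in> polys_lt d N 0"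
    using kernel_op_triangular[of 0 f] 0 by simp
  moreover have "kernel_eigenvalue 0 = 0" using kernel_eigenvalue_delta[of 0] 0 by simp
  ultimately show ?case using polys_lt_0_eq_0 \<open>s \<in> simplex d N\<close> by fastforce
next
  case (Suc k)
  have "(\<lambda>s. kernel_op f s - kernel_eigenvalue (Suc k) * f s) \<in> polys_lt d N (Suc k)"
    using kernel_op_triangular[of "Suc k" f] Suc by simp
  then have Bf: "kernel_op f \<in> polys_lt d N (Suc k)" using kernel_eigenvalue_delta[of "Suc k"] Suc by simp
  have BB: "kernel_op (kernel_op f) r = 0" if "r \<in> simplex d N" for r
    using Suc.IH[OF _ Bf that] Suc.prems by simp
  have "ipDM d \<alpha> N (kernel_op f) (kernel_op f) = ipDM d \<alpha> N f (kernel_op (kernel_op f))"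
    by (rule kernel_op_selfadjoint)
  also have "\<dots> = 0" using BB by (simp add: ipDM_def)
  finally show ?case using ipDM_self_eq_0[OF pos apos] Suc.prems by blast
qed

text \<open>On the degree-\<open>n\<close> orthogonal space \<open>B\<close> is the identity: \<open>h = Bf - f\<close> has degree
  \<open>< n\<close> (as \<open>\<mu>\<^sub>n = 1\<close>), and \<open>\<langle>h,h\<rangle> = \<langle>f, Bh\<rangle> - \<langle>f,h\<rangle> = 0\<close>.\<close>

lemma kernel_op_reproduces:
  assumes f: "f \<in> orth_polys d \<alpha> N n" and s: "s \<in> simplex d N"
  shows "kernel_op f s = f s"
proof -
  have fP: "f \<in> polys_lt d N (Suc n)" using f unfolding orth_polys_def polys_le_eq_polys_lt by simp
  define h where "h s = kernel_op f s - f s" for s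
  have hP: "h \<in> polys_lt d N n"
    using kernel_op_triangular[OF order.refl fP] kernel_eigenvalue_delta[of n] unfolding h_def by simp
  have "ipDM d \<alpha> N h h = 0"
  proof (cases n)
    case 0
    have "h x = 0" if "x \<in> simplex d N" for x using polys_lt_0_eq_0[OF hP[unfolded 0] that] .
    then show ?thesis by (simp add: ipDM_def)
  next
    case (Suc n')
    have "h \<in> polys_le d N n'" using hP Suc by (simp add: polys_le_eq_polys_lt)
    moreover have "\<forall>g. (\<exists>k<n. g \<in> polys_le d N k) \<longrightarrow> ipDM d \<alpha> N f g = 0"
      using f unfolding orth_polys_def by blast
    ultimately have orth: "ipDM d \<alpha> N f h = 0" using Suc by blast
    have "ipDM d \<alpha> N (kernel_op f) h = ipDM d \<alpha> N f (kernel_op h)"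
      by (rule kernel_op_selfadjoint)
    also have "\<dots> = 0" using kernel_op_vanishes[of n' h] hP Suc by (simp add: ipDM_def)
    finally have "ipDM d \<alpha> N (kernel_op f) h = 0" .
    moreover have "ipDM d \<alpha> N h h = ipDM d \<alpha> N (kernel_op f) h - ipDM d \<alpha> N f h"
      unfolding ipDM_def h_def by (simp add: sum_subtractf[symmetric] algebra_simps)
    ultimately show ?thesis using orth by simp
  qed
  then have "h s = 0" using ipDM_self_eq_0[OF pos apos _ s] by blast
  then show ?thesis unfolding h_def by simp
qed

text \<open>\<open>G(\<cdot>,s)\<close> lies in the degree-\<open>n\<close> orthogonal space: it is a polynomial of degree \<open>\<le> n\<close>,
  and its inner product with \<open>g\<close> is \<open>(Bg)(s)\<close>, which vanishes for \<open>deg g < n\<close>.\<close>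

lemma hahn_kernel_orth_polys:
  assumes s: "s \<in> simplex d N"
  shows "(\<lambda>r. hahn_kernel r s) \<in> orth_polys d \<alpha> N n"
proof -
  have "(\<lambda>r. hahn_kernel r s) \<in> polys_lt d N (Suc n)"
    unfolding hahn_kernel_def
    using polys_lt_mono[OF chiH_polys_lt] by (intro polys_lt_scale polys_lt_sum finite_atMost) auto
  moreover have "ipDM d \<alpha> N (\<lambda>r. hahn_kernel r s) g = 0" if "k < n" "g \<in> polys_le d N k" for g k
    using kernel_op_vanishes[of k g s] that s unfolding kernel_op_def by (simp add: polys_le_eq_polys_lt)
  ultimately show ?thesis unfolding orth_polys_def polys_le_eq_polys_lt by blast
qed

lemma onb_kernel_eq_hahn_kernel:
  assumes onb: "is_onb d \<alpha> N n Ps" and r: "r \<in> simplex d N" and s: "s \<in> simplex d N"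
  shows "(\<Sum>k<length Ps. (Ps!k) r * (Ps!k) s) = hahn_kernel r s"
proof (rule onb_kernel_unique[OF onb hahn_kernel_orth_polys[OF s] _ r])
  fix j assume "j < length Ps"
  then have "Ps!j \<in> orth_polys d \<alpha> N n" using onb unfolding is_onb_def by simp
  then show "ipDM d \<alpha> N (\<lambda>r. hahn_kernel r s) (Ps!j) = (Ps!j) s"
    using kernel_op_reproduces[OF _ s] unfolding kernel_op_def by blast
qed

end

theorem proposition3p4:
  fixes d N n :: nat and \<alpha> :: "nat \<Rightarrow> real"
    and Ps :: "((nat \<Rightarrow> nat) \<Rightarrow> real) list" and r s :: "nat \<Rightarrow> nat"
  assumes "d \<ge> 2"
    and "\<And>i. i < d \<Longrightarrow> \<alpha> i > 0"
    and "n \<le> N"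
    and "r \<in> simplex d N" and "s \<in> simplex d N"
    and "is_onb d \<alpha> N n Ps"
  shows "(\<Sum>k<length Ps. (Ps!k) r * (Ps!k) s)
       = ffact (real N) n / pochhammer (abs_alpha d \<alpha> + real N) n
         * (\<Sum>m\<le>n. a_coef (abs_alpha d \<alpha>) n m * chiH d \<alpha> N m r s)"
proof -
  have "abs_alpha d \<alpha> > 0" using abs_alpha_pos[of d \<alpha>] assms(1,2) by simp
  then show ?thesis
    using onb_kernel_eq_hahn_kernel[OF assms(2) _ assms(3) assms(6) assms(4) assms(5)]
    by (simp add: hahn_kernel_def[OF assms(2) _ assms(3)])
qed

end
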